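(* Let $n\geq 1$ and $k\ge 2$, and let $u$ be a word over $\Sigma_k$ of length at most $n$. Then $B_k(u,n)$ can be computed in $O(n^2)$ time using $O(n)$ space, under the unit-cost RAM model.
   Context: $\Sigma_k=\{1,2,\ldots,k\}$. A border of a word $w$ is a word that is both a non-empty proper prefix and a non-empty proper suffix of $w$; $w$ is bordered if it has a border. $B_k(u,n)$ denotes the number of length-$n$ bordered words over $\Sigma_k$ having $u$ as a prefix. Unit-cost RAM model: integer variables use constant space and integer arithmetic operations take constant time. *)

theory Defs
  imports Main "HOL-Library.Sublist"
begin

definition bordered :: "nat list \<Rightarrow> bool" where
  "bordered w \<longleftrightarrow> (\<exists>v. v \<noteq> [] \<and> length v < length w \<and> prefix v w \<and> suffix v w)"

definition B :: "nat \<Rightarrow> nat list \<Rightarrow> nat \<Rightarrow> nat" where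
  "B k u n = card {w. length w = n \<and> set w \<subseteq> {1..k} \<and> prefix u w \<and> bordered w}"

text \<open>Registers are indexed by natural numbers and hold unbounded integers.
  Every instruction costs one time unit; arithmetic on arbitrary integers is unit cost.\<close>

datatype instr =
    Const nat int
  | Add nat nat nat
  | Sub nat nat nat
  | Mul nat nat nat
  | Div nat nat nat
  | Mod nat nat nat
  | Load nat nat
  | Store nat nat
  | Jz nat nat
  | Jneg nat nat

type_synonym config = "nat \<times> (nat \<Rightarrow> int)"

fun exec :: "instr \<Rightarrow> config \<Rightarrow> config" where
  "exec (Const r v) (pc, m) = (Suc pc, m(r := v))"
| "exec (Add r a b) (pc, m) = (Suc pc, m(r := m a + m b))"
| "exec (Sub r a b) (pc, m) = (Suc pc, m(r := m a - m b))"
| "exec (Mul r a b) (pc, m) = (Suc pc, m(r := m a * m b))"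
| "exec (Div r a b) (pc, m) = (Suc pc, m(r := m a div m b))"
| "exec (Mod r a b) (pc, m) = (Suc pc, m(r := m a mod m b))"
| "exec (Load r a) (pc, m) = (Suc pc, m(r := m (nat (m a))))"
| "exec (Store a b) (pc, m) = (Suc pc, m(nat (m a) := m b))"
| "exec (Jz r l) (pc, m) = ((if m r = 0 then l else Suc pc), m)"
| "exec (Jneg r l) (pc, m) = ((if m r < 0 then l else Suc pc), m)"

definition step :: "instr list \<Rightarrow> config \<Rightarrow> config" where
  "step P c = (if fst c < length P then exec (P ! fst c) c else c)"

definition run :: "instr list \<Rightarrow> nat \<Rightarrow> config \<Rightarrow> config" where
  "run P t c = (step P ^^ t) c"

definition halted :: "instr list \<Rightarrow> config \<Rightarrow> bool" where
  "halted P c \<longleftrightarrow> length P \<le> fst c"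

text \<open>Input encoding: M[0] = k, M[1] = n, M[2] = |u|, M[3+i] = u_i, all other cells 0;
  execution starts at pc 0. Output: M[0] on halting.\<close>

definition init :: "nat \<Rightarrow> nat \<Rightarrow> nat list \<Rightarrow> config" where
  "init k n u = (0, \<lambda>a. if a = 0 then int k else if a = 1 then int n
                        else if a = 2 then int (length u)
                        else if 3 \<le> a \<and> a < 3 + length u then int (u ! (a - 3)) else 0)"

end

theory Submission
  imports Defs
begin

(*
  A bordered word w has a unique unbordered border, namely its shortest border v, and 2 |v| <= |w|;
  so w = v x v. Classifying the words of length m that begin with take m u by the length l of this
  border gives

    B(take m u, m) = sum (l = 1 .. m div 2) U(l) * g(l, m),
    U(m) = k ^ (m - min |u| m) - B(take m u, m),

  where U(l) counts the unbordered words of length l comparable with u (one is a prefix of the other)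
  and g(l, m) counts the middles x. It does not depend on v: it is a power of k, or it is 0 or 1
  according to whether the prefix of length min |u| m of u has period m - l.

  A RAM program tabulates the powers k ^ e for e <= n and, for every shift d, the length of the
  longest common prefix of u and drop d u, in O(n^2) steps; the recurrence then yields
  U(1), ..., U(n) and B(u, n) in O(n^2) further steps. Each table has n + 1 cells.
*)

section \<open>Prefixes and periods\<close>

lemma prefix_iff_take: "prefix v w \<longleftrightarrow> take (length v) w = v"
  unfolding prefix_def by (metis append_take_drop_id append_eq_conv_conj)

lemma suffix_iff_drop: "suffix v w \<longleftrightarrow> drop (length w - length v) w = v"
proof
  assume "suffix v w"
  then obtain zs where "w = zs @ v" unfolding suffix_def by blast
  then show "drop (length w - length v) w = v" by simp
next
  assume "drop (length w - length v) w = v"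
  then show "suffix v w" unfolding suffix_def by (metis append_take_drop_id)
qed

lemma comparable_iff_prefix_take:
  assumes "length w = m"
  shows "(prefix u w \<or> prefix w u) \<longleftrightarrow> prefix (take m u) w"
  using assms by (cases "length u \<le> m") (auto simp: prefix_iff_take min_def)

lemma prefix_take_imp_comparable:
  assumes "length v \<le> m" and "prefix (take m u) (v @ y)"
  shows "prefix u v \<or> prefix v u"
proof -
  have "prefix (take (length v) u) (v @ y)"
    using assms take_is_prefix[of "length v" "take m u"] by (simp add: min_def prefix_order.trans)
  then have "prefix (take (length v) u) v"
    by (rule prefix_length_prefix) auto
  then show ?thesis
    using comparable_iff_prefix_take by blast
qed

lemma prefix_append_longer:
  assumes "length x < length r"
  shows "prefix r (x @ v) \<longleftrightarrow> x = take (length x) r \<and> prefix (drop (length x) r) v"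
  using assms by (auto simp: prefix_append dest: prefix_length_le) (metis append_take_drop_id)

lemma common_prefix_period_iff:
  assumes "d + z \<le> length w" and "\<forall>i<z. w ! i = w ! (d + i)"
    and "d + z = length w \<or> w ! z \<noteq> w ! (d + z)" and "q \<le> length w"
  shows "q \<le> d + z \<longleftrightarrow> (\<forall>i < q - d. w ! i = w ! (d + i))"
proof
  assume "q \<le> d + z"
  then show "\<forall>i < q - d. w ! i = w ! (d + i)"
    using assms(2) by auto
next
  assume period: "\<forall>i < q - d. w ! i = w ! (d + i)"
  show "q \<le> d + z"
  proof (rule ccontr)
    assume "\<not> q \<le> d + z"
    then have "z < q - d" and "d + z < length w"
      using assms(4) by auto
    then show False
      using period assms(3) by auto
  qed
qed

section \<open>Borders\<close>

definition has_border :: "nat \<Rightarrow> nat list \<Rightarrow> bool" where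
  "has_border r w \<longleftrightarrow> 0 < r \<and> r < length w \<and> (\<forall>i<r. w ! i = w ! (length w - r + i))"

lemma bordered_iff_has_border: "bordered w \<longleftrightarrow> (\<exists>r. has_border r w)"
proof -
  have border_eq: "take r w = drop (length w - r) w \<longleftrightarrow> (\<forall>i<r. w ! i = w ! (length w - r + i))"
    if "r < length w" for r
    using that by (auto simp: list_eq_iff_nth_eq min_def)
  show ?thesis
  proof
    assume "bordered w"
    then obtain v where "v \<noteq> []" "length v < length w"
        "take (length v) w = v" "drop (length w - length v) w = v"
      unfolding bordered_def prefix_iff_take suffix_iff_drop by blast
    then have "has_border (length v) w"
      unfolding has_border_def using border_eq[of "length v"] by auto
    then show "\<exists>r. has_border r w" ..
  next
    assume "\<exists>r. has_border r w"
    then obtain r where "0 < r" "r < length w" "take r w = drop (length w - r) w"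
      unfolding has_border_def using border_eq by blast
    then show "bordered w"
      unfolding bordered_def prefix_iff_take suffix_iff_drop
      by (intro exI[of _ "take r w"]) auto
  qed
qed

lemma has_border_take:
  assumes "has_border r w" and "has_border s (take r w)"
  shows "has_border s w"
proof -
  have s: "0 < s" "s < r" "r < length w"
    using assms unfolding has_border_def by auto
  have "w ! i = w ! (length w - s + i)" if "i < s" for i
  proof -
    have "w ! i = w ! (r - s + i)"
      using assms(2) s that unfolding has_border_def by auto
    also have "\<dots> = w ! (length w - r + (r - s + i))"
      using assms(1) s that unfolding has_border_def by auto
    also have "length w - r + (r - s + i) = length w - s + i"
      using s by simp
    finally show ?thesis .
  qed
  then show ?thesis
    using s unfolding has_border_def by auto
qed

lemma has_border_overlap:
  assumes "has_border r w" and "length w < 2 * r"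
  shows "has_border (2 * r - length w) w"
proof -
  let ?d = "length w - r"
  have r: "0 < r" "r < length w" and per: "\<forall>i<r. w ! i = w ! (?d + i)"
    using assms(1) unfolding has_border_def by auto
  have "w ! i = w ! (length w - (2 * r - length w) + i)" if "i < 2 * r - length w" for i
  proof -
    have "w ! i = w ! (?d + (?d + i))"
      using per that r by auto
    also have "?d + (?d + i) = length w - (2 * r - length w) + i"
      using that r assms(2) by auto
    finally show ?thesis .
  qed
  then show ?thesis
    using r assms(2) unfolding has_border_def by auto
qed

definition unbordered_border :: "nat \<Rightarrow> nat list \<Rightarrow> bool" where
  "unbordered_border l w \<longleftrightarrow> has_border l w \<and> 2 * l \<le> length w \<and> \<not> bordered (take l w)"

lemma shortest_border_unbordered:
  assumes "bordered w"
  obtains l where "unbordered_border l w"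
proof -
  define r where "r = (LEAST r. has_border r w)"
  have r: "has_border r w"
    unfolding r_def using assms bordered_iff_has_border by (metis LeastI)
  have least: "r \<le> s" if "has_border s w" for s
    unfolding r_def using that by (rule Least_le)
  have "2 * r \<le> length w"
  proof (rule ccontr)
    assume "\<not> 2 * r \<le> length w"
    then have "r \<le> 2 * r - length w"
      using least has_border_overlap r by auto
    with r show False
      unfolding has_border_def by auto
  qed
  moreover have "\<not> bordered (take r w)"
  proof
    assume "bordered (take r w)"
    then obtain s where s: "has_border s (take r w)"
      using bordered_iff_has_border by blast
    then have "r \<le> s"
      using has_border_take r least by blast
    with s show False
      unfolding has_border_def by auto
  qed
  ultimately show ?thesis
    using r that unfolding unbordered_border_def by blast
qed

lemma unbordered_border_imp_bordered: "unbordered_border l w \<Longrightarrow> bordered w"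
  unfolding unbordered_border_def bordered_iff_has_border by blast

lemma unbordered_border_not_less:
  assumes "unbordered_border l w" and "unbordered_border l' w"
  shows "\<not> l < l'"
proof
  assume less: "l < l'"
  have len: "2 * l' \<le> length w" "l' < length w"
    using assms(2) unfolding unbordered_border_def has_border_def by auto
  have "take l' w ! i = take l' w ! (length (take l' w) - l + i)" if i: "i < l" for i
  proof -
    have "take l' w ! i = w ! (length w - l + i)"
      using assms(1) i less unfolding unbordered_border_def has_border_def by auto
    also have "length w - l + i = length w - l' + (l' - l + i)"
      using less i len by auto
    also have "w ! \<dots> = take l' w ! (l' - l + i)"
      using assms(2) less i unfolding unbordered_border_def has_border_def by auto
    finally show ?thesis
      using len by simp
  qed
  then have "has_border l (take l' w)"
    using assms(1) less len unfolding unbordered_border_def has_border_def by auto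
  then show False
    using assms(2) bordered_iff_has_border unfolding unbordered_border_def by blast
qed

lemma unbordered_border_unique: "unbordered_border l w \<Longrightarrow> unbordered_border l' w \<Longrightarrow> l = l'"
  using unbordered_border_not_less by (metis linorder_neqE_nat)

lemma unbordered_border_split:
  assumes "unbordered_border l w"
  shows "w = take l w @ take (length w - 2 * l) (drop l w) @ take l w"
proof -
  have half: "2 * l \<le> length w" and "\<forall>i<l. w ! i = w ! (length w - l + i)"
    using assms unfolding unbordered_border_def has_border_def by auto
  then have "drop (length w - l) w = take l w"
    by (auto simp: list_eq_iff_nth_eq)
  moreover have "drop (length w - 2 * l) (drop l w) = drop (length w - l) w"
    using half by (simp add: add.commute)
  ultimately show ?thesis
    by (metis append_take_drop_id)
qed

lemma unbordered_border_append_iff: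
  assumes "0 < l" and "length v = l"
  shows "unbordered_border l (v @ x @ v) \<longleftrightarrow> \<not> bordered v"
proof -
  have "(v @ x @ v) ! i = (v @ x @ v) ! (length (v @ x @ v) - l + i)" if "i < l" for i
    using assms that by (simp add: nth_append)
  then show ?thesis
    using assms unfolding unbordered_border_def has_border_def by auto
qed

section \<open>Counting bordered words with a given prefix\<close>

definition words :: "nat \<Rightarrow> nat \<Rightarrow> nat list set" where
  "words k L = {w. length w = L \<and> set w \<subseteq> {1..k}}"

lemma finite_words: "finite (words k L)"
  using finite_lists_length_eq[of "{1..k}" L] unfolding words_def by (simp add: conj_commute)

lemma card_words: "card (words k L) = k ^ L"
  using card_lists_length_eq[of "{1..k}" L] unfolding words_def by (simp add: conj_commute)

lemma card_words_with_prefix: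
  assumes "length r \<le> L" and "set r \<subseteq> {1..k}"
  shows "card {x \<in> words k L. prefix r x} = k ^ (L - length r)"
proof -
  have "{x \<in> words k L. prefix r x} = (\<lambda>y. r @ y) ` words k (L - length r)"
    using assms unfolding words_def prefix_def by (auto simp: subset_iff)
  moreover have "inj_on (\<lambda>y. r @ y) (words k (L - length r))"
    by (rule inj_onI) simp
  ultimately show ?thesis
    using card_words card_image by metis
qed

lemma B_eq_card_words: "B k u m = card {w \<in> words k m. prefix u w \<and> bordered w}"
  unfolding B_def words_def by (simp add: conj_ac)

definition unbordered_comparable :: "nat \<Rightarrow> nat list \<Rightarrow> nat \<Rightarrow> nat list set" where
  "unbordered_comparable k u l = {v \<in> words k l. \<not> bordered v \<and> (prefix u v \<or> prefix v u)}"

definition U :: "nat \<Rightarrow> nat list \<Rightarrow> nat \<Rightarrow> nat" where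
  "U k u l = card (unbordered_comparable k u l)"

text \<open>The number of words \<open>x\<close> such that \<open>v x v\<close> has length \<open>m\<close> and starts with \<open>take m u\<close>,
  for any \<open>v\<close> counted by \<open>U k u l\<close>. The three cases say whether \<open>take m u\<close> ends in the
  first \<open>v\<close>, in \<open>x\<close>, or in the second \<open>v\<close>; in the last case \<open>x\<close> is determined and
  the second \<open>v\<close> must agree with \<open>u\<close> shifted by \<open>m - l\<close>.\<close>

definition middle_count :: "nat \<Rightarrow> nat list \<Rightarrow> nat \<Rightarrow> nat \<Rightarrow> nat" where
  "middle_count k u l m = (let q = min (length u) m in
     if q \<le> l then k ^ (m - 2 * l)
     else if q \<le> m - l then k ^ (m - l - q)
     else if (\<forall>i < q - (m - l). u ! i = u ! (m - l + i)) then 1 else 0)"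

context
  fixes k :: nat and u :: "nat list" and l m :: nat
  assumes u_letters: "set u \<subseteq> {1..k}" and l_pos: "0 < l" and l_half: "2 * l \<le> m"
begin

definition middles :: "nat list \<Rightarrow> nat list set" where
  "middles v = {x \<in> words k (m - 2 * l). prefix (take m u) (v @ x @ v)}"

lemma middles_short:
  assumes "v \<in> unbordered_comparable k u l" and "min (length u) m \<le> l"
  shows "middles v = words k (m - 2 * l)"
proof -
  have "prefix (take l u) v"
    using assms(1) comparable_iff_prefix_take unfolding unbordered_comparable_def words_def by auto
  moreover have "take m u = take (min (length u) m) (take l u)"
    using assms(2) by (simp add: min_def)
  ultimately have "prefix (take m u) v"
    using prefix_order.trans[OF take_is_prefix] by metis
  then show ?thesis
    unfolding middles_def by (auto intro: prefix_order.trans)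
qed

lemma middles_long:
  assumes "v \<in> unbordered_comparable k u l" and "l < min (length u) m"
  shows "v = take l u"
    and "middles v = {x \<in> words k (m - 2 * l). prefix (drop l (take m u)) (x @ v)}"
proof -
  have "length v = l" "prefix (take l u) v"
    using assms(1) comparable_iff_prefix_take unfolding unbordered_comparable_def words_def by auto
  moreover have "length (take l u) = l"
    using assms(2) by simp
  ultimately show v_eq: "v = take l u"
    unfolding prefix_iff_take by simp
  have "take l (take m u) = take l u"
    using l_half by (simp add: min_def)
  then have "take m u = v @ drop l (take m u)"
    unfolding v_eq by (metis append_take_drop_id)
  then show "middles v = {x \<in> words k (m - 2 * l). prefix (drop l (take m u)) (x @ v)}"
    unfolding middles_def by (metis (no_types, lifting) same_prefix_prefix)
qed

lemma card_middles_overlap: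
  assumes v: "v \<in> unbordered_comparable k u l" and long: "m - l < min (length u) m"
  shows "card (middles v) =
    (if \<forall>i < min (length u) m - (m - l). u ! i = u ! (m - l + i) then 1 else 0)"
proof -
  define r where "r = drop l (take m u)"
  define L where "L = m - 2 * l"
  have short_x: "L < length r"
    using long l_pos l_half unfolding r_def L_def by (simp add: min_def)
  have v_eq: "v = take l u" and middles_eq: "middles v = {x \<in> words k L. prefix r (x @ v)}"
    using middles_long[OF v] long l_half unfolding r_def L_def by auto
  have drop_r: "drop L r = drop (m - l) (take m u)"
    unfolding r_def L_def using l_half by (simp add: add.commute)
  have "prefix (drop L r) v \<longleftrightarrow> (\<forall>i < min (length u) m - (m - l). u ! i = u ! (m - l + i))"
    unfolding prefix_iff_take drop_r v_eq using long by (auto simp: list_eq_iff_nth_eq)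
  moreover have "middles v = (if prefix (drop L r) v then {take L r} else {})"
  proof -
    have "take L r \<in> words k L"
      using short_x u_letters unfolding words_def r_def
      by (auto dest!: in_set_takeD in_set_dropD)
    moreover have "prefix r (x @ v) \<longleftrightarrow> x = take L r \<and> prefix (drop L r) v"
      if "length x = L" for x
      using prefix_append_longer[of x r v] that short_x by simp
    ultimately show ?thesis
      unfolding middles_eq words_def by auto
  qed
  ultimately show ?thesis
    by simp
qed

lemma card_middles:
  assumes v: "v \<in> unbordered_comparable k u l"
  shows "card (middles v) = middle_count k u l m"
proof -
  define q where "q = min (length u) m"
  consider (short) "q \<le> l" | (middle) "l < q" "q \<le> m - l" | (overlap) "m - l < q"
    by linarith
  then show ?thesis
  proof cases
    case short
    then show ?thesis
      using middles_short[OF v] unfolding middle_count_def Let_def q_def[symmetric]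
      by (simp add: card_words)
  next
    case middle
    let ?r = "drop l (take m u)"
    have "length ?r = q - l" "set ?r \<subseteq> {1..k}"
      unfolding q_def using u_letters by (auto dest!: in_set_takeD in_set_dropD)
    moreover have "middles v = {x \<in> words k (m - 2 * l). prefix ?r x}"
      using middles_long(2)[OF v] middle \<open>length ?r = q - l\<close> unfolding q_def words_def
      by (auto simp: prefix_iff_take)
    ultimately have "card (middles v) = k ^ (m - 2 * l - (q - l))"
      using card_words_with_prefix[of ?r "m - 2 * l" k] middle by simp
    then show ?thesis
      using middle unfolding middle_count_def Let_def q_def[symmetric] by simp
  next
    case overlap
    then show ?thesis
      using card_middles_overlap[OF v] l_half unfolding middle_count_def Let_def q_def[symmetric]
      by simp
  qed
qed

lemma words_with_unbordered_border_eq: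
  "{w \<in> words k m. prefix (take m u) w \<and> unbordered_border l w}
     = (\<lambda>(v, x). v @ x @ v) ` (SIGMA v:unbordered_comparable k u l. middles v)"
proof (intro set_eqI iffI)
  fix w assume "w \<in> {w \<in> words k m. prefix (take m u) w \<and> unbordered_border l w}"
  then have w: "length w = m" "set w \<subseteq> {1..k}" "prefix (take m u) w" "unbordered_border l w"
    unfolding words_def by auto
  define v where "v = take l w"
  define x where "x = take (m - 2 * l) (drop l w)"
  have w_eq: "w = v @ x @ v"
    unfolding v_def x_def using unbordered_border_split[OF w(4)] w(1) by simp
  have lengths: "length v = l" "length x = m - 2 * l"
    unfolding v_def x_def using w(1) l_half by auto
  have "set v \<subseteq> {1..k}" "set x \<subseteq> {1..k}"
    using w(2) unfolding v_def x_def by (meson order_trans set_take_subset set_drop_subset)+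
  moreover have "\<not> bordered v"
    using w(4) unfolding v_def unbordered_border_def by blast
  moreover have "prefix (take m u) (v @ x @ v)"
    using w(3) w_eq by simp
  ultimately have "v \<in> unbordered_comparable k u l" "x \<in> middles v"
    using lengths l_half prefix_take_imp_comparable[of v m u "x @ v"]
    unfolding unbordered_comparable_def middles_def words_def by auto
  then show "w \<in> (\<lambda>(v, x). v @ x @ v) ` (SIGMA v:unbordered_comparable k u l. middles v)"
    using w_eq by force
next
  fix w assume "w \<in> (\<lambda>(v, x). v @ x @ v) ` (SIGMA v:unbordered_comparable k u l. middles v)"
  then obtain v x where w: "w = v @ x @ v" and "v \<in> unbordered_comparable k u l" "x \<in> middles v"
    by (auto elim!: imageE)
  then have v: "length v = l" "set v \<subseteq> {1..k}" "\<not> bordered v"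
    and x: "length x = m - 2 * l" "set x \<subseteq> {1..k}" "prefix (take m u) (v @ x @ v)"
    unfolding unbordered_comparable_def middles_def words_def by auto
  have "unbordered_border l w"
    unfolding w using unbordered_border_append_iff[OF l_pos v(1)] v(3) by blast
  moreover have "length w = m"
    unfolding w using v x l_half by simp
  ultimately show "w \<in> {w \<in> words k m. prefix (take m u) w \<and> unbordered_border l w}"
    unfolding words_def using w v x by simp
qed

lemma card_words_with_unbordered_border:
  "card {w \<in> words k m. prefix (take m u) w \<and> unbordered_border l w} = U k u l * middle_count k u l m"
proof -
  have "inj_on (\<lambda>(v, x). v @ x @ v) (SIGMA v:unbordered_comparable k u l. middles v)"
  proof (rule inj_onI, clarify)
    fix v x v' x'
    assume "v \<in> unbordered_comparable k u l" "v' \<in> unbordered_comparable k u l"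
      and eq: "v @ x @ v = v' @ x' @ v'"
    then have "length v = length v'"
      unfolding unbordered_comparable_def words_def by simp
    then show "v = v' \<and> x = x'"
      using eq by auto
  qed
  then have "card {w \<in> words k m. prefix (take m u) w \<and> unbordered_border l w}
      = card (SIGMA v:unbordered_comparable k u l. middles v)"
    unfolding words_with_unbordered_border_eq by (rule card_image)
  also have "\<dots> = (\<Sum>v\<in>unbordered_comparable k u l. card (middles v))"
    using finite_words by (simp add: card_SigmaI unbordered_comparable_def middles_def)
  also have "\<dots> = U k u l * middle_count k u l m"
    using card_middles by (simp add: U_def)
  finally show ?thesis .
qed
end

theorem B_take_eq_sum:
  assumes "set u \<subseteq> {1..k}"
  shows "B k (take m u) m = (\<Sum>l = 1..m div 2. U k u l * middle_count k u l m)"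
proof -
  define A where "A l = {w \<in> words k m. prefix (take m u) w \<and> unbordered_border l w}" for l
  have "{w \<in> words k m. prefix (take m u) w \<and> bordered w} = (\<Union>l\<in>{1..m div 2}. A l)"
  proof (intro set_eqI iffI)
    fix w assume w: "w \<in> {w \<in> words k m. prefix (take m u) w \<and> bordered w}"
    then obtain l where l: "unbordered_border l w"
      using shortest_border_unbordered by blast
    then have "l \<in> {1..m div 2}"
      using w unfolding unbordered_border_def has_border_def words_def by auto
    then show "w \<in> (\<Union>l\<in>{1..m div 2}. A l)"
      using w l unfolding A_def by blast
  next
    fix w assume "w \<in> (\<Union>l\<in>{1..m div 2}. A l)"
    then show "w \<in> {w \<in> words k m. prefix (take m u) w \<and> bordered w}"
      unfolding A_def using unbordered_border_imp_bordered by blast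
  qed
  moreover have "card (\<Union>l\<in>{1..m div 2}. A l) = (\<Sum>l = 1..m div 2. card (A l))"
    by (rule card_UN_disjoint)
      (auto simp: A_def finite_words dest: unbordered_border_unique)
  moreover have "card (A l) = U k u l * middle_count k u l m" if "l \<in> {1..m div 2}" for l
    unfolding A_def using card_words_with_unbordered_border[OF assms] that by auto
  ultimately show ?thesis
    unfolding B_eq_card_words by simp
qed

theorem U_add_B_take:
  assumes "set u \<subseteq> {1..k}"
  shows "U k u m + B k (take m u) m = k ^ (m - min (length u) m)"
proof -
  let ?bordered = "{w \<in> words k m. prefix (take m u) w \<and> bordered w}"
  have "set (take m u) \<subseteq> {1..k}"
    using assms by (meson order_trans set_take_subset)
  then have "k ^ (m - min (length u) m) = card {w \<in> words k m. prefix (take m u) w}"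
    using card_words_with_prefix[of "take m u" m k] by (simp add: min.commute)
  also have "{w \<in> words k m. prefix (take m u) w} = unbordered_comparable k u m \<union> ?bordered"
    using comparable_iff_prefix_take unfolding unbordered_comparable_def words_def by auto
  also have "card \<dots> = U k u m + card ?bordered"
    unfolding U_def unbordered_comparable_def
    by (rule card_Un_disjoint) (auto simp: finite_words)
  finally show ?thesis
    unfolding B_eq_card_words by simp
qed

section \<open>Running time and memory of RAM programs\<close>

definition mem_bounded :: "nat \<Rightarrow> (nat \<Rightarrow> int) \<Rightarrow> bool" where
  "mem_bounded b mem \<longleftrightarrow> (\<forall>a \<ge> b. mem a = 0)"

lemma mem_bounded_upd [simp]: "mem_bounded b mem \<Longrightarrow> a < b \<Longrightarrow> mem_bounded b (mem(a := v))"
  unfolding mem_bounded_def by auto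

definition reaches :: "instr list \<Rightarrow> nat \<Rightarrow> config \<Rightarrow> (config \<Rightarrow> bool) \<Rightarrow> nat \<Rightarrow> bool" where
  "reaches P b c Q T \<longleftrightarrow>
     (\<exists>t \<le> T. Q (run P t c) \<and> (\<forall>s \<le> t. mem_bounded b (snd (run P s c))))"

lemma step_in_range [simp]: "pc < length P \<Longrightarrow> step P (pc, mem) = exec (P ! pc) (pc, mem)"
  unfolding step_def by simp

lemma run_0 [simp]: "run P 0 c = c"
  unfolding run_def by simp

lemma run_Suc: "run P (Suc t) c = run P t (step P c)"
  unfolding run_def by (simp only: funpow_Suc_right comp_def)

lemma run_add: "run P (t2 + t1) c = run P t2 (run P t1 c)"
  unfolding run_def by (simp add: funpow_add)

lemma reaches_now: "mem_bounded b (snd c) \<Longrightarrow> Q c \<Longrightarrow> reaches P b c Q T"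
  unfolding reaches_def by (intro exI[of _ 0]) auto

lemma reaches_step:
  assumes "0 < T" and "mem_bounded b (snd c)" and "reaches P b (step P c) Q (T - 1)"
  shows "reaches P b c Q T"
proof -
  obtain t where t: "t \<le> T - 1" "Q (run P t (step P c))"
      "\<forall>s \<le> t. mem_bounded b (snd (run P s (step P c)))"
    using assms(3) unfolding reaches_def by blast
  have "mem_bounded b (snd (run P s c))" if "s \<le> Suc t" for s
    using t(3) assms(2) that by (cases s) (auto simp: run_Suc)
  then show ?thesis
    unfolding reaches_def using t assms(1) by (intro exI[of _ "Suc t"]) (auto simp: run_Suc)
qed

lemma reaches_seq:
  assumes "reaches P b c Q1 T1"
    and "\<And>c'. Q1 c' \<Longrightarrow> mem_bounded b (snd c') \<Longrightarrow> reaches P b c' Q2 T2"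
  shows "reaches P b c Q2 (T1 + T2)"
proof -
  obtain t1 where t1: "t1 \<le> T1" "Q1 (run P t1 c)" "\<forall>s \<le> t1. mem_bounded b (snd (run P s c))"
    using assms(1) unfolding reaches_def by blast
  then obtain t2 where t2: "t2 \<le> T2" "Q2 (run P t2 (run P t1 c))"
      "\<forall>s \<le> t2. mem_bounded b (snd (run P s (run P t1 c)))"
    using assms(2) unfolding reaches_def by blast
  have "mem_bounded b (snd (run P s c))" if "s \<le> t2 + t1" for s
  proof (cases "s \<le> t1")
    case False
    then have "run P s c = run P (s - t1) (run P t1 c)"
      using run_add[of P "s - t1" t1] by simp
    then show ?thesis
      using t2(3) that False by auto
  qed (use t1 in auto)
  then show ?thesis
    unfolding reaches_def using t1 t2 run_add[of P t2 t1 c] by (intro exI[of _ "t2 + t1"]) auto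
qed

lemma reaches_mono:
  assumes "reaches P b c Q T" and "T \<le> T'" and "\<And>c. Q c \<Longrightarrow> Q' c"
  shows "reaches P b c Q' T'"
  using assms unfolding reaches_def by (meson order_trans)

lemma reaches_loop:
  assumes iter: "\<And>j c. j < M \<Longrightarrow> I j c \<Longrightarrow> reaches P b c (\<lambda>c'. Q c' \<or> I (Suc j) c') T"
    and last: "\<And>c. I M c \<Longrightarrow> reaches P b c Q T"
    and start: "I 0 c"
  shows "reaches P b c Q (Suc M * T)"
proof -
  have "reaches P b c Q ((Suc M - j) * T)" if "j \<le> M" "I j c" for j c
    using that
  proof (induction "M - j" arbitrary: j c)
    case 0
    then show ?case
      using last by simp
  next
    case (Suc x)
    then have j: "j < M"
      by simp
    have "reaches P b c Q (T + (Suc M - Suc j) * T)"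
    proof (rule reaches_seq[OF iter[OF j Suc.prems(2)]])
      fix c' assume "Q c' \<or> I (Suc j) c'" and "mem_bounded b (snd c')"
      then show "reaches P b c' Q ((Suc M - Suc j) * T)"
        using Suc.hyps(1)[of "Suc j" c'] Suc.hyps(2) j by (auto intro: reaches_now)
    qed
    then show ?case
      using j by (simp add: Suc_diff_le)
  qed
  then show ?thesis
    using start by fastforce
qed

section \<open>The program\<close>

definition u_base :: "nat \<Rightarrow> nat" where "u_base n = 64 * n + 3"
definition pow_base :: "nat \<Rightarrow> nat" where "pow_base n = 65 * n + 4"
definition lcp_base :: "nat \<Rightarrow> nat" where "lcp_base n = 66 * n + 5"
definition U_base :: "nat \<Rightarrow> nat" where "U_base n = 67 * n + 6"

text \<open>Registers 0-2 are scratch; 3 and 4 hold the constants 0 and 1, so that \<open>Jz 3 l\<close> is an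
  unconditional jump; 5, 6, 7 hold \<open>k\<close>, \<open>n\<close>, \<open>length u\<close>; 8-11 hold the base addresses
  \<open>u_base n\<close>, \<open>pow_base n\<close>, \<open>lcp_base n\<close>, \<open>U_base n\<close> of four tables of \<open>n + 1\<close> cells: a copy
  of \<open>u\<close>, the powers \<open>k ^ e\<close>, the periods of \<open>u\<close> and the values \<open>U k u l\<close>; 12-16 are loop
  variables. By instruction index (the phases are separated by blank lines in the listing):
  \<^item> 0-33: compute \<open>64 n\<close> by doubling, copy \<open>k\<close> and \<open>u\<close> above it (\<open>u\<close> ends at the first cell
    holding 0, as letters are positive), and initialise registers 3-11;
  \<^item> 34-42: for \<open>e = 0, \<dots>, n\<close> store \<open>k ^ e\<close>;
  \<^item> 43-65: for \<open>d = 1, \<dots>, length u - 1\<close> store \<open>d + z\<close>, where \<open>z\<close> is the length of the longest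
    common prefix of \<open>u\<close> and \<open>drop d u\<close>; so \<open>q \<le> d + z\<close> iff the prefix of length \<open>q\<close> of \<open>u\<close> has
    period \<open>d\<close>;
  \<^item> 66-109: for \<open>m = 1, \<dots>, n\<close> accumulate \<open>B k (take m u) m = \<Sum>l. U k u l * middle_count k u l m\<close>
    in register 15 (76-101), then store \<open>U k u m = k ^ (m - min (length u) m) - B k (take m u) m\<close>;
  \<^item> 110: output register 15.\<close>

definition prog :: "instr list" where
  "prog = [
   Add 1 1 1, Add 1 1 1, Add 1 1 1, Add 1 1 1, Add 1 1 1, Add 1 1 1,
   Const 2 1, Add 2 1 2, Store 2 0, Const 2 3,
   Load 0 2, Jz 0 19, Add 2 2 1, Store 2 0, Sub 2 2 1, Const 0 1, Add 2 2 0, Const 0 0, Jz 0 10,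
   Const 3 0, Const 4 1, Const 0 3, Sub 7 2 0, Add 8 1 0, Add 0 1 4, Load 5 0, Const 0 64,
   Div 6 1 0, Add 9 8 6, Add 9 9 4, Add 10 9 6, Add 10 10 4, Add 11 10 6, Add 11 11 4,

   Const 12 0, Const 16 1,
   Add 0 9 12, Store 0 16, Sub 1 12 6, Jz 1 43, Mul 16 16 5, Add 12 12 4, Jz 3 36,

   Const 12 1,
   Sub 0 7 12, Sub 0 0 4, Jneg 0 66, Const 13 0,
   Add 0 12 13, Sub 1 7 0, Sub 1 1 4, Jneg 1 61, Add 1 8 13, Load 1 1, Add 0 8 0, Load 0 0,
   Sub 0 0 1, Jz 0 59, Jz 3 61, Add 13 13 4, Jz 3 48,
   Add 0 10 12, Add 1 12 13, Store 0 1, Add 12 12 4, Jz 3 44,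

   Const 12 1,
   Sub 0 6 12, Jneg 0 110, Add 14 7 3, Sub 0 7 12, Sub 0 0 4, Jneg 0 74, Add 14 12 3,
   Const 15 0, Const 13 1,
   Add 0 13 13, Sub 0 12 0, Jneg 0 102,
   Sub 1 13 14, Jneg 1 84, Add 0 9 0, Load 2 0, Jz 3 96,
   Sub 0 12 13, Sub 1 0 14, Jneg 1 90, Add 1 9 1, Load 2 1, Jz 3 96,
   Add 1 10 0, Load 1 1, Sub 1 1 14, Const 2 0, Jneg 1 96, Const 2 1,
   Add 0 11 13, Load 0 0, Mul 0 0 2, Add 15 15 0, Add 13 13 4, Jz 3 76,
   Sub 0 12 14, Add 0 9 0, Load 0 0, Sub 0 0 15, Add 1 11 12, Store 1 0, Add 12 12 4, Jz 3 67,

   Add 0 15 3]"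

lemma length_prog [simp]: "length prog = 111"
  by (simp add: prog_def)

lemmas prog_nth [simp] = arg_cong[where f = "\<lambda>p. p ! i" for i, OF prog_def]

section \<open>Correctness of the program\<close>

lemma nat_int_diff [simp]: "nat (int a - int b) = a - b"
  by (cases "b \<le> a") (auto simp: of_nat_diff)

lemma nat_int_diff_double [simp]: "nat (int a - 2 * int b) = a - 2 * b"
  by (metis nat_int_diff of_nat_mult of_nat_numeral)

declare nat_add_distrib [simp] nat_mult_distrib [simp]

locale count_input =
  fixes k n :: nat and u :: "nat list"
  assumes n_ge_1: "1 \<le> n" and u_short: "length u \<le> n" and u_letters: "set u \<subseteq> {1..k}"
begin

abbreviation prog_reaches :: "config \<Rightarrow> (config \<Rightarrow> bool) \<Rightarrow> nat \<Rightarrow> bool" where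
  "prog_reaches \<equiv> reaches prog (80 * n)"

definition copy_inv :: "nat \<Rightarrow> (nat \<Rightarrow> int) \<Rightarrow> bool" where
  "copy_inv j m \<longleftrightarrow> m 1 = int (64 * n) \<and> m 2 = int (3 + j) \<and> m (64 * n + 1) = int k \<and>
     (\<forall>i<length u. m (3 + i) = int (u ! i)) \<and> m (3 + length u) = 0 \<and>
     (\<forall>i<j. m (64 * n + 3 + i) = int (u ! i)) \<and> mem_bounded (80 * n) m"

lemma init_mem_bounded: "mem_bounded (80 * n) (snd (init k n u))"
  using u_short n_ge_1 unfolding mem_bounded_def init_def by auto

lemma copy_start: "prog_reaches (init k n u) (\<lambda>c. fst c = 10 \<and> copy_inv 0 (snd c)) 10"
  using init_mem_bounded n_ge_1 u_short unfolding init_def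
  apply simp
  apply (rule reaches_step, simp, simp, simp)+
  apply (rule reaches_now)
   apply simp
  apply (auto simp: copy_inv_def mem_bounded_def)
  done

lemma copy_loop:
  assumes "copy_inv 0 m"
  shows "prog_reaches (10, m) (\<lambda>c. fst c = 19 \<and> copy_inv (length u) (snd c)) (Suc (length u) * 9)"
proof (rule reaches_loop[where I="\<lambda>j c. fst c = 10 \<and> copy_inv j (snd c)"])
  show "fst (10, m) = 10 \<and> copy_inv 0 (snd (10, m))" using assms by simp
next
  fix j and c :: config assume j: "j < length u" and I: "fst c = 10 \<and> copy_inv j (snd c)"
  obtain m where c: "c = (10, m)" using I by (cases c) auto
  have copy_inv: "copy_inv j m" using I c by simp
  have st: "m 2 = int (3 + j)" "m (3 + j) = int (u ! j)" "m 1 = int (64 * n)" "mem_bounded (80 * n) m" "u ! j \<noteq> 0" "j < n"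
    using copy_inv j u_letters u_short unfolding copy_inv_def apply auto
    using nth_mem by fastforce
  have "prog_reaches (10, m) (\<lambda>c'. fst c' = 10 \<and> copy_inv (Suc j) (snd c')) 9"
    using st
    apply -
    apply (rule reaches_step, simp, simp, simp)+
    apply (rule reaches_now)
     apply simp
    using copy_inv j u_short unfolding copy_inv_def by (auto simp: less_Suc_eq)
  then show "prog_reaches c (\<lambda>c'. (fst c' = 19 \<and> copy_inv (length u) (snd c')) \<or> (fst c' = 10 \<and> copy_inv (Suc j) (snd c'))) 9"
    unfolding c by (rule reaches_mono) auto
next
  fix c :: config assume I: "fst c = 10 \<and> copy_inv (length u) (snd c)"
  obtain m where c: "c = (10, m)" using I by (cases c) auto
  have copy_inv: "copy_inv (length u) m" using I c by simp
  have st: "m 2 = int (3 + length u)" "m (3 + length u) = 0" "mem_bounded (80 * n) m"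
    using copy_inv unfolding copy_inv_def by auto
  have "prog_reaches (10, m) (\<lambda>c. fst c = 19 \<and> copy_inv (length u) (snd c)) 2"
    using st copy_inv n_ge_1
    apply -
    apply (rule reaches_step, simp, simp, simp)+
    apply (rule reaches_now)
     apply simp
    apply (simp add: copy_inv_def)
    done
  then show "prog_reaches c (\<lambda>c. fst c = 19 \<and> copy_inv (length u) (snd c)) 9"
    unfolding c by (rule reaches_mono) auto
qed

definition layout :: "(nat \<Rightarrow> int) \<Rightarrow> bool" where
  "layout m \<longleftrightarrow> m 3 = 0 \<and> m 4 = 1 \<and> m 5 = int k \<and> m 6 = int n \<and> m 7 = int (length u) \<and>
     m 8 = int (u_base n) \<and> m 9 = int (pow_base n) \<and> m 10 = int (lcp_base n) \<and>
     m 11 = int (U_base n) \<and> (\<forall>i<length u. m (u_base n + i) = int (u ! i)) \<and> mem_bounded (80 * n) m"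

lemma layout_regs: "layout m \<Longrightarrow> m 3 = 0 \<and> m 4 = 1 \<and> m 5 = int k \<and> m 6 = int n \<and> m 7 = int (length u) \<and>
     m 8 = int (u_base n) \<and> m 9 = int (pow_base n) \<and> m 10 = int (lcp_base n) \<and> m 11 = int (U_base n) \<and> mem_bounded (80 * n) m"
  unfolding layout_def by simp

lemma layout_upd [simp]:
  assumes "layout m" "a < 3 \<or> (12 \<le> a \<and> a \<le> 16) \<or> (pow_base n \<le> a \<and> a < 80 * n)"
  shows "layout (m(a := v))"
proof -
  have "a < 80 * n" using assms(2) n_ge_1 by auto
  moreover have "\<And>i. i < length u \<Longrightarrow> u_base n + i \<noteq> a" using assms(2) u_short unfolding u_base_def pow_base_def by auto
  moreover have "16 < pow_base n" unfolding pow_base_def using n_ge_1 by simp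
  ultimately show ?thesis using assms(1) assms(2) unfolding layout_def by auto
qed

lemma setup_registers:
  assumes "copy_inv (length u) m"
  shows "prog_reaches (19, m) (\<lambda>c. fst c = 34 \<and> layout (snd c)) 15"
proof -
  have st: "m 2 = int (3 + length u)" "m 1 = int (64 * n)" "m (64 * n + 1) = int k" "mem_bounded (80 * n) m"
     "\<forall>i<length u. m (64 * n + 3 + i) = int (u ! i)"
    using assms unfolding copy_inv_def by auto
  show ?thesis
    using st n_ge_1
    apply -
    apply (rule reaches_step, simp, simp, simp)+
    apply (rule reaches_now)
     apply simp
    using u_short by (auto simp: layout_def u_base_def pow_base_def lcp_base_def U_base_def)
qed

lemma setup_phase: "prog_reaches (init k n u) (\<lambda>c. fst c = 34 \<and> layout (snd c)) (10 + Suc (length u) * 9 + 15)"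
proof -
  have "prog_reaches (init k n u) (\<lambda>c. fst c = 19 \<and> copy_inv (length u) (snd c)) (10 + Suc (length u) * 9)"
  proof (rule reaches_seq[OF copy_start])
    fix c :: config assume "fst c = 10 \<and> copy_inv 0 (snd c)"
    then show "prog_reaches c (\<lambda>c. fst c = 19 \<and> copy_inv (length u) (snd c)) (Suc (length u) * 9)"
      using copy_loop by (cases c) auto
  qed
  then show ?thesis
  proof (rule reaches_seq)
    fix c :: config assume "fst c = 19 \<and> copy_inv (length u) (snd c)"
    then show "prog_reaches c (\<lambda>c. fst c = 34 \<and> layout (snd c)) 15"
      using setup_registers by (cases c) auto
  qed
qed

lemma bases_ne_registers [simp]:
  assumes "a < 17"
  shows "u_base n + j \<noteq> a" "a \<noteq> u_base n + j" "u_base n \<noteq> a" "a \<noteq> u_base n"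
    and "pow_base n + j \<noteq> a" "a \<noteq> pow_base n + j" "pow_base n \<noteq> a" "a \<noteq> pow_base n"
    and "lcp_base n + j \<noteq> a" "a \<noteq> lcp_base n + j" "lcp_base n \<noteq> a" "a \<noteq> lcp_base n"
    and "U_base n + j \<noteq> a" "a \<noteq> U_base n + j" "U_base n \<noteq> a" "a \<noteq> U_base n"
  using assms n_ge_1 by (simp_all add: u_base_def pow_base_def lcp_base_def U_base_def)

definition powers_table :: "(nat \<Rightarrow> int) \<Rightarrow> bool" where
  "powers_table m \<longleftrightarrow> (\<forall>e\<le>n. m (pow_base n + e) = int k ^ e)"

definition powers_inv :: "nat \<Rightarrow> config \<Rightarrow> bool" where
  "powers_inv j c \<longleftrightarrow> fst c = 36 \<and> layout (snd c) \<and> snd c 12 = int j \<and> snd c 16 = int k ^ j \<and>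
     (\<forall>e<j. snd c (pow_base n + e) = int k ^ e)"

lemma pow_base_bound: "e \<le> n \<Longrightarrow> pow_base n + e < 80 * n" unfolding pow_base_def using n_ge_1 by simp

lemma powers_iter:
  assumes j: "j < n" and I: "powers_inv j (36, m)"
  shows "prog_reaches (36, m) (powers_inv (Suc j)) 7"
proof -
  have lay: "layout m" and st: "m 12 = int j" "m 16 = int k ^ j" "\<forall>e<j. m (pow_base n + e) = int k ^ e"
    using I unfolding powers_inv_def by auto
  have b: "pow_base n + j < 80 * n" using pow_base_bound j by simp
  show ?thesis
    using layout_regs[OF lay] st j n_ge_1 b
    apply -
    apply (rule reaches_step, simp, simp, simp)+
    apply (rule reaches_now)
     apply simp
    using lay st b by (auto simp: powers_inv_def less_Suc_eq pow_base_def)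
qed

lemma powers_exit:
  assumes I: "powers_inv n (36, m)"
  shows "prog_reaches (36, m) (\<lambda>c. fst c = 43 \<and> layout (snd c) \<and> powers_table (snd c)) 4"
proof -
  have lay: "layout m" and st: "m 12 = int n" "m 16 = int k ^ n" "\<forall>e<n. m (pow_base n + e) = int k ^ e"
    using I unfolding powers_inv_def by auto
  have b: "pow_base n + n < 80 * n" using pow_base_bound by simp
  show ?thesis
    using layout_regs[OF lay] st n_ge_1 b
    apply -
    apply (rule reaches_step, simp, simp, simp)+
    apply (rule reaches_now)
     apply simp
    using lay st b by (auto simp: powers_table_def le_less pow_base_def)
qed

lemma powers_block:
  assumes lay: "layout m"
  shows "prog_reaches (34, m) (\<lambda>c. fst c = 43 \<and> layout (snd c) \<and> powers_table (snd c)) (2 + Suc n * 7)"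
proof (rule reaches_seq)
  show "prog_reaches (34, m) (powers_inv 0) 2"
    using layout_regs[OF lay] n_ge_1
    apply -
    apply (rule reaches_step, simp, simp, simp)+
    apply (rule reaches_now)
     apply simp
    using lay by (auto simp: powers_inv_def)
next
  fix c assume "powers_inv 0 c"
  then show "prog_reaches c (\<lambda>c. fst c = 43 \<and> layout (snd c) \<and> powers_table (snd c)) (Suc n * 7)"
  proof (rule reaches_loop[where I=powers_inv, rotated 2])
    fix j and c :: config assume "j < n" "powers_inv j c"
    then show "prog_reaches c (\<lambda>c'. (fst c' = 43 \<and> layout (snd c') \<and> powers_table (snd c')) \<or> powers_inv (Suc j) c') 7"
      using powers_iter[of j "snd c"] unfolding powers_inv_def
      by (cases c) (auto elim!: reaches_mono simp: powers_inv_def)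
  next
    fix c :: config assume "powers_inv n c"
    then show "prog_reaches c (\<lambda>c. fst c = 43 \<and> layout (snd c) \<and> powers_table (snd c)) 7"
      using powers_exit[of "snd c"] unfolding powers_inv_def
      by (cases c) (auto elim!: reaches_mono)
  qed
qed

lemma register_lt_mem_bound [simp]: "a < 17 \<Longrightarrow> a < 80 * n" using n_ge_1 by simp

definition lcp_table :: "nat \<Rightarrow> (nat \<Rightarrow> int) \<Rightarrow> bool" where
  "lcp_table j m \<longleftrightarrow> (\<forall>d q. 1 \<le> d \<longrightarrow> d \<le> j \<longrightarrow> d < q \<longrightarrow> q \<le> length u \<longrightarrow>
      (int q \<le> m (lcp_base n + d) \<longleftrightarrow> (\<forall>i<q - d. u ! i = u ! (d + i))))"

definition scan_inv :: "nat \<Rightarrow> nat \<Rightarrow> config \<Rightarrow> bool" where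
  "scan_inv d z c \<longleftrightarrow> fst c = 48 \<and> layout (snd c) \<and> powers_table (snd c) \<and> lcp_table (d - 1) (snd c) \<and>
     snd c 12 = int d \<and> snd c 13 = int z \<and> d + z \<le> length u \<and> 1 \<le> d \<and> (\<forall>i<z. u ! i = u ! (d + i))"

definition scan_done :: "nat \<Rightarrow> config \<Rightarrow> bool" where
  "scan_done d c \<longleftrightarrow> fst c = 61 \<and> layout (snd c) \<and> powers_table (snd c) \<and> lcp_table (d - 1) (snd c) \<and>
     snd c 12 = int d \<and> 1 \<le> d \<and> (\<exists>z. snd c 13 = int z \<and> d + z \<le> length u \<and> (\<forall>i<z. u ! i = u ! (d + i)) \<and>
       (d + z = length u \<or> u ! z \<noteq> u ! (d + z)))"

lemma powers_table_upd [simp]: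
  assumes "powers_table m" "a < 17 \<or> lcp_base n \<le> a"
  shows "powers_table (m(a := v))"
  unfolding powers_table_def
proof (intro allI impI)
  fix e assume e: "e \<le> n"
  have "pow_base n + e \<noteq> a" using assms(2) e n_ge_1 unfolding pow_base_def lcp_base_def by auto
  then have "(m(a := v)) (pow_base n + e) = m (pow_base n + e)" by simp
  then show "(m(a := v)) (pow_base n + e) = int k ^ e" using assms(1) e unfolding powers_table_def by simp
qed

lemma lcp_table_upd [simp]:
  assumes "lcp_table j m" "a < 17 \<or> lcp_base n + j < a"
  shows "lcp_table j (m(a := v))"
  unfolding lcp_table_def
proof (intro allI impI)
  fix d q assume dq: "1 \<le> d" "d \<le> j" "d < q" "q \<le> length u"
  have "lcp_base n + d \<noteq> a" using assms(2) dq n_ge_1 unfolding lcp_base_def by auto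
  then have "(m(a := v)) (lcp_base n + d) = m (lcp_base n + d)" by simp
  then show "(int q \<le> (m(a := v)) (lcp_base n + d)) = (\<forall>i<q - d. u ! i = u ! (d + i))"
    using assms(1) dq unfolding lcp_table_def by simp
qed

lemma layout_u: "layout m \<Longrightarrow> i < length u \<Longrightarrow> m (u_base n + i) = int (u ! i)" unfolding layout_def by simp

lemma scan_iter:
  assumes z: "z < length u - d" and I: "scan_inv d z (48, m)"
  shows "prog_reaches (48, m) (\<lambda>c. scan_done d c \<or> scan_inv d (Suc z) c) 12"
proof -
  have lay: "layout m" and st: "powers_table m" "lcp_table (d - 1) m" "m 12 = int d" "m 13 = int z" "d + z \<le> length u" "1 \<le> d"
     "\<forall>i<z. u ! i = u ! (d + i)"
    using I unfolding scan_inv_def by auto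
  have dz: "d + z < length u" using z by simp
  have a1: "m (u_base n + z) = int (u ! z)" using layout_u[OF lay] dz by simp
  have a2: "m (u_base n + (d + z)) = int (u ! (d + z))" using layout_u[OF lay] dz by simp
  show ?thesis
  proof (cases "u ! z = u ! (d + z)")
    case True
    have "prog_reaches (48, m) (scan_inv d (Suc z)) 12"
      using layout_regs[OF lay] st(3,4) dz a1 a2 True n_ge_1
      apply -
      apply (rule reaches_step, simp, simp, simp)+
      apply (rule reaches_now)
       apply simp
      using lay st dz True by (auto simp: scan_inv_def less_Suc_eq)
    then show ?thesis by (rule reaches_mono) auto
  next
    case False
    then have F: "int (u ! (d + z)) - int (u ! z) \<noteq> 0" by simp
    have "prog_reaches (48, m) (scan_done d) 11"
      using layout_regs[OF lay] st(3,4) dz a1 a2 F n_ge_1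
      apply -
      apply (rule reaches_step, simp, simp, simp)+
      apply (rule reaches_now)
       apply simp
      using lay st dz False by (auto simp: scan_done_def)
    then show ?thesis by (rule reaches_mono) auto
  qed
qed

lemma scan_exit:
  assumes z: "z = length u - d" and I: "scan_inv d z (48, m)"
  shows "prog_reaches (48, m) (scan_done d) 4"
proof -
  have lay: "layout m" and st: "powers_table m" "lcp_table (d - 1) m" "m 12 = int d" "m 13 = int z" "d + z \<le> length u" "1 \<le> d"
     "\<forall>i<z. u ! i = u ! (d + i)"
    using I unfolding scan_inv_def by auto
  have dz: "d + z = length u" using z st(5) by simp
  show ?thesis
    using layout_regs[OF lay] st(3,4) dz n_ge_1
    apply -
    apply (rule reaches_step, simp, simp, simp)+
    apply (rule reaches_now)
     apply simp
    using lay st dz by (auto simp: scan_done_def)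
qed

lemma scan_loop:
  assumes I: "scan_inv d 0 (48, m)"
  shows "prog_reaches (48, m) (scan_done d) (Suc (length u - d) * 12)"
proof (rule reaches_loop[where I="scan_inv d"])
  show "scan_inv d 0 (48, m)" by (rule I)
next
  fix z and c :: config assume "z < length u - d" "scan_inv d z c"
  then show "prog_reaches c (\<lambda>c'. scan_done d c' \<or> scan_inv d (Suc z) c') 12"
    using scan_iter[of z d "snd c"] unfolding scan_inv_def by (cases c) auto
next
  fix c :: config assume "scan_inv d (length u - d) c"
  then show "prog_reaches c (scan_done d) 12"
    using scan_exit[of "length u - d" d "snd c"] unfolding scan_inv_def
    by (cases c) (auto elim!: reaches_mono)
qed

definition lcp_inv :: "nat \<Rightarrow> config \<Rightarrow> bool" where
  "lcp_inv j c \<longleftrightarrow> fst c = 44 \<and> layout (snd c) \<and> powers_table (snd c) \<and> lcp_table j (snd c) \<and>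
     snd c 12 = int (Suc j)"

lemma lcp_table_store:
  assumes "lcp_table (d - 1) m" and "0 < d" and "d + z \<le> length u"
    and "\<forall>i<z. u ! i = u ! (d + i)" and "d + z = length u \<or> u ! z \<noteq> u ! (d + z)"
  shows "lcp_table d (m(lcp_base n + d := int d + int z))"
  unfolding lcp_table_def
proof (intro allI impI)
  fix d' q assume d': "1 \<le> d'" "d' \<le> d" "d' < q" "q \<le> length u"
  show "int q \<le> (m(lcp_base n + d := int d + int z)) (lcp_base n + d')
      \<longleftrightarrow> (\<forall>i < q - d'. u ! i = u ! (d' + i))"
  proof (cases "d' = d")
    case True
    have "int q \<le> int d + int z \<longleftrightarrow> q \<le> d + z"
      by linarith
    then show ?thesis
      using common_prefix_period_iff[OF assms(3-5) d'(4)] True by simp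
  next
    case False
    then show ?thesis
      using assms(1) d' unfolding lcp_table_def by simp
  qed
qed

lemma lcp_store:
  assumes Q: "scan_done d (61, m)"
  shows "prog_reaches (61, m) (lcp_inv d) 5"
proof -
  have lay: "layout m" and st: "powers_table m" "lcp_table (d - 1) m" "m 12 = int d" "1 \<le> d"
    using Q unfolding scan_done_def by auto
  obtain z where z: "m 13 = int z" "d + z \<le> length u" "\<forall>i<z. u ! i = u ! (d + i)"
       "d + z = length u \<or> u ! z \<noteq> u ! (d + z)"
    using Q unfolding scan_done_def by auto
  have b: "lcp_base n + d < 80 * n" using z(2) u_short n_ge_1 unfolding lcp_base_def by simp
  have b2: "lcp_base n + (d - 1) < lcp_base n + d" using st(4) by simp
  have b3: "pow_base n \<le> lcp_base n + d" unfolding pow_base_def lcp_base_def by simp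
  show ?thesis
    using layout_regs[OF lay] st(3) z(1) n_ge_1 b b2
    apply -
    apply (rule reaches_step, simp, simp, simp)+
    apply (rule reaches_now)
     apply simp
    using lay st b b3 by (simp add: lcp_inv_def lcp_table_store[OF _ _ z(2-4)])
qed

lemma n_pos [simp]: "0 < n" using n_ge_1 by simp
lemma lcp_enter_scan:
  assumes j: "Suc j < length u" and I: "lcp_inv j (44, m)"
  shows "prog_reaches (44, m) (scan_inv (Suc j) 0) 4"
proof -
  have lay: "layout m" and st: "powers_table m" "lcp_table j m" "m 12 = int (Suc j)"
    using I unfolding lcp_inv_def by auto
  show ?thesis
    using layout_regs[OF lay] st(3) j
    apply -
    apply (rule reaches_step, simp, simp, simp)+
    apply (rule reaches_now)
     apply simp
    using lay st j by (simp add: scan_inv_def)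
qed

lemma lcp_iter:
  assumes j: "j < length u - 1" and I: "lcp_inv j c"
  shows "prog_reaches c (lcp_inv (Suc j)) (12 * n + 21)"
proof -
  obtain m where c: "c = (44, m)" using I unfolding lcp_inv_def by (cases c) auto
  have j': "Suc j < length u" using j by simp
  have "prog_reaches (44, m) (lcp_inv (Suc j)) (4 + Suc (length u - Suc j) * 12 + 5)"
  proof (rule reaches_seq)
    show "prog_reaches (44, m) (scan_done (Suc j)) (4 + Suc (length u - Suc j) * 12)"
    proof (rule reaches_seq[OF lcp_enter_scan[OF j' I[unfolded c]]])
      fix c' :: config assume "scan_inv (Suc j) 0 c'"
      then show "prog_reaches c' (scan_done (Suc j)) (Suc (length u - Suc j) * 12)"
        using scan_loop[of "Suc j" "snd c'"] unfolding scan_inv_def by (cases c') auto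
    qed
  next
    fix c' :: config assume "scan_done (Suc j) c'"
    then show "prog_reaches c' (lcp_inv (Suc j)) 5"
      using lcp_store[of "Suc j" "snd c'"] unfolding scan_done_def by (cases c') auto
  qed
  moreover have "4 + Suc (length u - Suc j) * 12 + 5 \<le> 12 * n + 21" using u_short by simp
  ultimately show ?thesis unfolding c by (rule reaches_mono) auto
qed

lemma lcp_exit:
  assumes j: "length u \<le> Suc j" and I: "lcp_inv j (44, m)"
  shows "prog_reaches (44, m) (\<lambda>c. fst c = 66 \<and> layout (snd c) \<and> powers_table (snd c) \<and> lcp_table j (snd c)) 3"
proof -
  have lay: "layout m" and st: "powers_table m" "lcp_table j m" "m 12 = int (Suc j)"
    using I unfolding lcp_inv_def by auto
  show ?thesis
    using layout_regs[OF lay] st(3) j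
    apply -
    apply (rule reaches_step, simp, simp, simp)+
    apply (rule reaches_now)
     apply simp
    using lay st j by simp
qed

lemma lcp_block:
  assumes "layout m" "powers_table m"
  shows "prog_reaches (43, m) (\<lambda>c. fst c = 66 \<and> layout (snd c) \<and> powers_table (snd c) \<and> lcp_table (length u - 1) (snd c))
     (1 + Suc (length u - 1) * (12 * n + 21))"
proof (rule reaches_seq)
  show "prog_reaches (43, m) (lcp_inv 0) 1"
    using assms layout_regs[OF assms(1)]
    apply -
    apply (rule reaches_step, simp, simp, simp)+
    apply (rule reaches_now)
     apply simp
    by (simp add: lcp_inv_def lcp_table_def)
next
  fix c :: config assume "lcp_inv 0 c"
  then show "prog_reaches c (\<lambda>c. fst c = 66 \<and> layout (snd c) \<and> powers_table (snd c) \<and> lcp_table (length u - 1) (snd c))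
     (Suc (length u - 1) * (12 * n + 21))"
  proof (rule reaches_loop[where I=lcp_inv, rotated 2])
    fix j and c :: config assume a: "j < length u - 1" "lcp_inv j c"
    show "prog_reaches c (\<lambda>c'. (fst c' = 66 \<and> layout (snd c') \<and> powers_table (snd c') \<and> lcp_table (length u - 1) (snd c')) \<or> lcp_inv (Suc j) c') (12 * n + 21)"
      using lcp_iter[OF a] by (rule reaches_mono) auto
  next
    fix c :: config assume I: "lcp_inv (length u - 1) c"
    obtain m where c: "c = (44, m)" using I unfolding lcp_inv_def by (cases c) auto
    have "prog_reaches c (\<lambda>c. fst c = 66 \<and> layout (snd c) \<and> powers_table (snd c) \<and> lcp_table (length u - 1) (snd c)) 3"
      using lcp_exit[of "length u - 1" m] I c by simp
    then show "prog_reaches c (\<lambda>c. fst c = 66 \<and> layout (snd c) \<and> powers_table (snd c) \<and> lcp_table (length u - 1) (snd c)) (12 * n + 21)"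
      by (rule reaches_mono) auto
  qed
qed

definition U_table :: "nat \<Rightarrow> (nat \<Rightarrow> int) \<Rightarrow> bool" where
  "U_table M m \<longleftrightarrow> (\<forall>l. 1 \<le> l \<longrightarrow> l < M \<longrightarrow> m (U_base n + l) = int (U k u l))"

definition lcp_full :: "(nat \<Rightarrow> int) \<Rightarrow> bool" where
  "lcp_full m \<longleftrightarrow> lcp_table (length u - 1) m"

definition sum_inv :: "nat \<Rightarrow> nat \<Rightarrow> config \<Rightarrow> bool" where
  "sum_inv len l c \<longleftrightarrow> fst c = 76 \<and> layout (snd c) \<and> powers_table (snd c) \<and> lcp_full (snd c) \<and>
     U_table len (snd c) \<and> snd c 12 = int len \<and> snd c 14 = int (min (length u) len) \<and> snd c 13 = int l \<and> 1 \<le> l \<and>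
     snd c 15 = (\<Sum>x\<in>{1..<l}. int (U k u x) * int (middle_count k u x len)) \<and> 1 \<le> len \<and> len \<le> n"

lemma sum_invD:
  assumes "sum_inv len l (76, m)"
  shows "layout m" "powers_table m" "lcp_full m" "U_table len m" "m 12 = int len"
    "m 14 = int (min (length u) len)" "m 13 = int l" "1 \<le> l"
    "m 15 = (\<Sum>x\<in>{1..<l}. int (U k u x) * int (middle_count k u x len))" "1 \<le> len" "len \<le> n"
  using assms unfolding sum_inv_def by auto

lemma powers_tableD: "powers_table m \<Longrightarrow> e \<le> n \<Longrightarrow> m (pow_base n + e) = int k ^ e"
  unfolding powers_table_def by simp

lemma layout_frame: "layout m \<Longrightarrow> (\<forall>a. 2 < a \<and> a < 12 \<or> 16 < a \<longrightarrow> m' a = m a) \<Longrightarrow> layout m'"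
proof -
  assume lay: "layout m" and fr: "\<forall>a. 2 < a \<and> a < 12 \<or> 16 < a \<longrightarrow> m' a = m a"
  have "\<And>i. 16 < u_base n + i" unfolding u_base_def using n_ge_1 by linarith
  have "mem_bounded (80 * n) m'" unfolding mem_bounded_def
  proof (intro allI impI)
    fix a assume a: "80 * n \<le> a"
    then have "16 < a" using n_ge_1 by linarith
    then have "m' a = m a" using fr by simp
    then show "m' a = 0" using lay a unfolding layout_def mem_bounded_def by simp
  qed
  then show "layout m'" using lay fr \<open>\<And>i. 16 < u_base n + i\<close> unfolding layout_def by auto
qed

lemma powers_table_frame:
  assumes "powers_table m" "\<forall>a. 16 < a \<longrightarrow> m' a = m a" shows "powers_table m'"
  unfolding powers_table_def
proof (intro allI impI)
  fix e assume e: "e \<le> n"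
  have "16 < pow_base n + e" using n_ge_1 unfolding pow_base_def by linarith
  then have "m' (pow_base n + e) = m (pow_base n + e)" using assms(2) by simp
  then show "m' (pow_base n + e) = int k ^ e" using assms(1) e unfolding powers_table_def by simp
qed

lemma lcp_fullD:
  "lcp_full m \<Longrightarrow> 0 < d \<Longrightarrow> d < q \<Longrightarrow> q \<le> length u \<Longrightarrow>
    int q \<le> m (lcp_base n + d) \<longleftrightarrow> (\<forall>i < q - d. u ! i = u ! (d + i))"
  unfolding lcp_full_def lcp_table_def by simp

lemma lcp_full_frame:
  assumes "lcp_full m" "\<forall>a. 16 < a \<longrightarrow> m' a = m a" shows "lcp_full m'"
  unfolding lcp_full_def lcp_table_def
proof (intro allI impI)
  fix d q assume dq: "1 \<le> d" "d \<le> length u - 1" "d < q" "q \<le> length u"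
  have "16 < lcp_base n + d" using n_ge_1 unfolding lcp_base_def by linarith
  then have "m' (lcp_base n + d) = m (lcp_base n + d)" using assms(2) by simp
  then show "(int q \<le> m' (lcp_base n + d)) = (\<forall>i<q - d. u ! i = u ! (d + i))"
    using assms(1) dq unfolding lcp_full_def lcp_table_def by simp
qed

lemma U_table_frame:
  assumes "U_table M m" "\<forall>a. 16 < a \<longrightarrow> m' a = m a" shows "U_table M m'"
  unfolding U_table_def
proof (intro allI impI)
  fix l assume l: "1 \<le> l" "l < M"
  have "16 < U_base n + l" using n_ge_1 unfolding U_base_def by linarith
  then have "m' (U_base n + l) = m (U_base n + l)" using assms(2) by simp
  then show "m' (U_base n + l) = int (U k u l)" using assms(1) l unfolding U_table_def by simp
qed

lemma sum_inv_next:
  assumes I: "sum_inv len l (76, m)"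
    and fr: "\<forall>a. a \<noteq> 0 \<and> a \<noteq> 1 \<and> a \<noteq> 2 \<and> a \<noteq> 13 \<and> a \<noteq> 15 \<longrightarrow> m' a = m a"
    and m13: "m' 13 = int l + 1"
    and m15: "m' 15 = m 15 + int (U k u l) * int (middle_count k u l len)"
  shows "sum_inv len (Suc l) (76, m')"
proof -
  note lay = sum_invD(1)[OF I] and st = sum_invD(2-11)[OF I]
  have fr2: "\<forall>a. 16 < a \<longrightarrow> m' a = m a" using fr by auto
  have "layout m'" using layout_frame[OF lay] fr by auto
  moreover have "powers_table m'" using powers_table_frame[OF st(1) fr2] .
  moreover have "lcp_full m'" using lcp_full_frame[OF st(2) fr2] .
  moreover have "U_table len m'" using U_table_frame[OF st(3) fr2] .
  moreover have "m' 15 = (\<Sum>x\<in>{1..<Suc l}. int (U k u x) * int (middle_count k u x len))"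
    using m15 st(8) st(7) by (simp add: sum.atLeastLessThan_Suc)
  ultimately show ?thesis using st fr m13 unfolding sum_inv_def by auto
qed

lemma sum_iter_short:
  assumes I: "sum_inv len l (76, m)" and l2: "2 * l \<le> len" and q: "min (length u) len \<le> l"
  shows "prog_reaches (76, m) (sum_inv len (Suc l)) 14"
proof -
  note lay = sum_invD(1)[OF I] and st = sum_invD(2-11)[OF I]
  have w: "m (U_base n + l) = int (U k u l)" using st(3,7) l2 unfolding U_table_def by simp
  define q where "q = min (length u) len"
  have f5: "m 14 = int q" using st(5) q_def by simp
  have q': "q \<le> l" using q q_def by simp
  have gv: "middle_count k u l len = k ^ (len - 2 * l)" using q' unfolding middle_count_def q_def Let_def by simp
  have eqA: "pow_base n + len - 2 * l = pow_base n + (len - 2 * l)" using l2 by simp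
  have pw: "m (pow_base n + len - 2 * l) = int k ^ (len - 2 * l)"
    apply (subst eqA) apply (rule powers_tableD[OF st(1)]) using l2 st(10) by simp
  have ne: "pow_base n + len - 2 * l \<noteq> 0" "pow_base n + len - 2 * l \<noteq> Suc 0" "\<not> pow_base n + len \<le> 2 * l"
    unfolding eqA using n_ge_1 l2 by (auto simp: pow_base_def)
  show ?thesis
    using layout_regs[OF lay] st(4,6) f5 w pw ne l2 q' st(10)
    apply -
    apply (rule reaches_step, simp, simp, simp)+
    apply (rule reaches_now)
     apply simp
    apply (rule sum_inv_next[OF I])
    using gv by auto
qed

lemma sum_iter_middle:
  assumes I: "sum_inv len l (76, m)" and l2: "2 * l \<le> len" and q1: "l < min (length u) len"
    and q2: "min (length u) len \<le> len - l"
  shows "prog_reaches (76, m) (sum_inv len (Suc l)) 17"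
proof -
  note lay = sum_invD(1)[OF I] and st = sum_invD(2-11)[OF I]
  have w: "m (U_base n + l) = int (U k u l)" using st(3,7) l2 unfolding U_table_def by simp
  define q where "q = min (length u) len"
  have f5: "m 14 = int q" using st(5) q_def by simp
  have q': "l < q" "q \<le> len - l" using q1 q2 q_def by auto
  have gv: "middle_count k u l len = k ^ (len - l - q)" using q' unfolding middle_count_def Let_def q_def[symmetric] by simp
  have eqA: "pow_base n + len - l - q = pow_base n + (len - l - q)" "pow_base n + len - (l + q) = pow_base n + (len - l - q)"
    using q' by auto
  have pw: "m (pow_base n + len - l - q) = int k ^ (len - l - q)" "m (pow_base n + len - (l + q)) = int k ^ (len - l - q)"
    apply (subst eqA) apply (rule powers_tableD[OF st(1)]) using st(10) apply simp
    apply (subst eqA) apply (rule powers_tableD[OF st(1)]) using st(10) by simp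
  have ne: "pow_base n + len - l - q \<noteq> 0" "pow_base n + len - l - q \<noteq> Suc 0" "pow_base n + len - (l + q) \<noteq> 0"
    "pow_base n + len - (l + q) \<noteq> Suc 0" "\<not> pow_base n + len \<le> l + q"
    unfolding eqA using n_ge_1 q' by (auto simp: pow_base_def)
  have qi: "\<not> int len - int l < int q" using q' by simp
  have nn: "nat (int len - int l - int q) = len - l - q" using q' by linarith
  have pw3: "m (pow_base n + nat (int len - int l - int q)) = int k ^ (len - (l + q))"
    unfolding nn using powers_tableD[OF st(1), of "len - l - q"] st(10) by simp
  show ?thesis
    using layout_regs[OF lay] st(4,6) f5 w pw ne l2 q' st(10) qi
    apply -
    apply (rule reaches_step, simp, simp, simp)+
    apply (rule reaches_now)
     apply simp
    apply (rule sum_inv_next[OF I])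
    using gv pw3 by auto
qed

lemma sum_iter_overlap:
  assumes I: "sum_inv len l (76, m)" and l2: "2 * l \<le> len" and q1: "len - l < min (length u) len"
  shows "prog_reaches (76, m) (sum_inv len (Suc l)) 20"
proof -
  note lay = sum_invD(1)[OF I] and st = sum_invD(2-11)[OF I]
  have w: "m (U_base n + l) = int (U k u l)" using st(3,7) l2 unfolding U_table_def by simp
  define q where "q = min (length u) len"
  have f5: "m 14 = int q" using st(5) q_def by simp
  have q': "len - l < q" "q \<le> length u" "l < q" using q1 q_def l2 st(7) by auto
  define e where "e = m (lcp_base n + (len - l))"
  define C where "C = (\<forall>i<q - (len - l). u ! i = u ! (len - l + i))"
  have gv: "middle_count k u l len = (if C then 1 else 0)" using q' unfolding middle_count_def Let_def q_def[symmetric] C_def by simp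
  have eC: "int q \<le> e \<longleftrightarrow> C"
    unfolding e_def C_def using lcp_fullD[OF st(2), of "len - l" q] q' l2 st(7) by simp
  have eqA: "lcp_base n + len - l = lcp_base n + (len - l)" using l2 by simp
  have nn: "nat (int len - int l) = len - l" by simp
  have ee: "m (lcp_base n + len - l) = e" "m (lcp_base n + nat (int len - int l)) = e" unfolding eqA nn e_def by simp_all
  have ne: "lcp_base n + len - l \<noteq> 0" "lcp_base n + len - l \<noteq> Suc 0" "\<not> lcp_base n + len \<le> l"
    unfolding eqA using n_ge_1 l2 by (auto simp: lcp_base_def)
  have qi: "int len - int l < int q" using q' by simp
  show ?thesis
  proof (cases C)
    case True
    then have ci: "\<not> e - int q < 0" using eC by simp
    show ?thesis
      using layout_regs[OF lay] st(4,6) f5 w ee ne l2 q' st(10) qi ci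
      apply -
      apply (rule reaches_step, simp, simp, simp)+
      apply (rule reaches_now)
       apply simp
      apply (rule sum_inv_next[OF I])
      using gv True by auto
  next
    case False
    then have ci: "e - int q < 0" using eC by simp
    have "prog_reaches (76, m) (sum_inv len (Suc l)) 19"
      using layout_regs[OF lay] st(4,6) f5 w ee ne l2 q' st(10) qi ci
      apply -
      apply (rule reaches_step, simp, simp, simp)+
      apply (rule reaches_now)
       apply simp
      apply (rule sum_inv_next[OF I])
      using gv False by auto
    then show ?thesis by (rule reaches_mono) auto
  qed
qed

lemma lcp_full_upd_low [simp]: "lcp_full m \<Longrightarrow> a < 17 \<Longrightarrow> lcp_full (m(a := v))"
  by (rule lcp_full_frame) auto

lemma U_table_upd_low [simp]: "U_table M m \<Longrightarrow> a < 17 \<Longrightarrow> U_table M (m(a := v))"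
  by (rule U_table_frame) auto

lemma sum_iter:
  assumes I: "sum_inv len l (76, m)" and l2: "2 * l \<le> len"
  shows "prog_reaches (76, m) (sum_inv len (Suc l)) 20"
proof -
  consider (short) "min (length u) len \<le> l"
    | (middle) "l < min (length u) len" "min (length u) len \<le> len - l"
    | (overlap) "len - l < min (length u) len"
    by linarith
  then show ?thesis
  proof cases
    case short
    show ?thesis
      by (rule reaches_mono[OF sum_iter_short[OF I l2 short]]) auto
  next
    case middle
    show ?thesis
      by (rule reaches_mono[OF sum_iter_middle[OF I l2 middle]]) auto
  next
    case overlap
    show ?thesis
      by (rule sum_iter_overlap[OF I l2 overlap])
  qed
qed

definition sum_done :: "nat \<Rightarrow> config \<Rightarrow> bool" where
  "sum_done len c \<longleftrightarrow> fst c = 102 \<and> layout (snd c) \<and> powers_table (snd c) \<and> lcp_full (snd c) \<and>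
     U_table len (snd c) \<and> snd c 12 = int len \<and> snd c 14 = int (min (length u) len) \<and>
     snd c 15 = int (B k (take len u) len) \<and> 1 \<le> len \<and> len \<le> n"

lemma sum_exit:
  assumes I: "sum_inv len l (76, m)" and l2: "len < 2 * l" "l \<le> Suc (len div 2)"
  shows "prog_reaches (76, m) (sum_done len) 3"
proof -
  note lay = sum_invD(1)[OF I] and st = sum_invD(2-11)[OF I]
  have lv: "l = Suc (len div 2)" using l2 by linarith
  have S: "m 15 = int (B k (take len u) len)"
  proof -
    have "{1..<l} = {1..len div 2}" using lv by auto
    then show ?thesis using st(8) B_take_eq_sum[OF u_letters, of len] by simp
  qed
  have li: "int len - 2 * int l < 0" using l2 by simp
  show ?thesis
    using layout_regs[OF lay] st(4,6) li
    apply -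
    apply (rule reaches_step, simp, simp, simp)+
    apply (rule reaches_now)
     apply simp
    using lay st S by (simp add: sum_done_def)
qed

lemma sum_loop:
  assumes I: "sum_inv len 1 (76, m)"
  shows "prog_reaches (76, m) (sum_done len) (Suc (len div 2) * 20)"
proof (rule reaches_loop[where I="\<lambda>i. sum_inv len (Suc i)"])
  show "sum_inv len (Suc 0) (76, m)" using I by simp
next
  fix i and c :: config assume a: "i < len div 2" "sum_inv len (Suc i) c"
  obtain m' where c: "c = (76, m')" using a unfolding sum_inv_def by (cases c) auto
  have "prog_reaches c (sum_inv len (Suc (Suc i))) 20" unfolding c
    by (rule sum_iter) (use a c in auto)
  then show "prog_reaches c (\<lambda>c'. sum_done len c' \<or> sum_inv len (Suc (Suc i)) c') 20" by (rule reaches_mono) auto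
next
  fix c :: config assume a: "sum_inv len (Suc (len div 2)) c"
  obtain m' where c: "c = (76, m')" using a unfolding sum_inv_def by (cases c) auto
  have "prog_reaches c (sum_done len) 3" unfolding c
    by (rule sum_exit) (use a c in auto)
  then show "prog_reaches c (sum_done len) 20" by (rule reaches_mono) auto
qed

definition main_inv :: "nat \<Rightarrow> config \<Rightarrow> bool" where
  "main_inv j c \<longleftrightarrow> fst c = 67 \<and> layout (snd c) \<and> powers_table (snd c) \<and> lcp_full (snd c) \<and>
     U_table (Suc j) (snd c) \<and> snd c 12 = int (Suc j) \<and> (1 \<le> j \<longrightarrow> snd c 15 = int (B k (take j u) j)) \<and> j \<le> n"

lemma main_enter_sum:
  assumes I: "main_inv j (67, m)" and j: "j < n"
  shows "prog_reaches (67, m) (sum_inv (Suc j) 1) 9"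
proof -
  have lay: "layout m" and st: "powers_table m" "lcp_full m" "U_table (Suc j) m" "m 12 = int (Suc j)"
    using I unfolding main_inv_def by auto
  have ji: "\<not> int n - (1 + int j) < 0" using j by simp
  show ?thesis
  proof (cases "length u \<le> Suc j")
    case True
    have pi: "int (length u) - (1 + int j) - 1 < 0" using True by simp
    have "prog_reaches (67, m) (sum_inv (Suc j) 1) 8"
      using layout_regs[OF lay] st(4) ji pi
      apply -
      apply (rule reaches_step, simp, simp, simp)+
      apply (rule reaches_now)
       apply simp
      using lay st j True by (simp add: sum_inv_def min_def)
    then show ?thesis by (rule reaches_mono) auto
  next
    case False
    have pi: "\<not> int (length u) - (1 + int j) - 1 < 0" using False by simp
    show ?thesis
      using layout_regs[OF lay] st(4) ji pi
      apply -
      apply (rule reaches_step, simp, simp, simp)+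
      apply (rule reaches_now)
       apply simp
      using lay st j False by (simp add: sum_inv_def min_def)
  qed
qed

lemma main_exit:
  assumes I: "main_inv n (67, m)"
  shows "prog_reaches (67, m) (\<lambda>c. fst c = 111 \<and> snd c 0 = int (B k (take n u) n)) 3"
proof -
  have lay: "layout m" and st: "m 12 = int (Suc n)" "m 15 = int (B k (take n u) n)"
    using I n_ge_1 unfolding main_inv_def by auto
  show ?thesis
    using layout_regs[OF lay] st
    apply -
    apply (rule reaches_step, simp, simp, simp)+
    apply (rule reaches_now)
     apply simp
    by simp
qed

lemma lcp_full_upd_high [simp]: "lcp_full m \<Longrightarrow> U_base n \<le> a \<Longrightarrow> lcp_full (m(a := v))"
  unfolding lcp_full_def by (rule lcp_table_upd) (use u_short in \<open>auto simp: lcp_base_def U_base_def\<close>)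

lemma powers_table_upd_high [simp]: "powers_table m \<Longrightarrow> U_base n \<le> a \<Longrightarrow> powers_table (m(a := v))"
  by (rule powers_table_upd) (auto simp: lcp_base_def U_base_def)

lemma U_table_extend:
  assumes "U_table len m" "m' (U_base n + len) = int (U k u len)" "\<forall>a. 16 < a \<and> a \<noteq> U_base n + len \<longrightarrow> m' a = m a"
  shows "U_table (Suc len) m'"
  unfolding U_table_def
proof (intro allI impI)
  fix l assume l: "1 \<le> l" "l < Suc len"
  show "m' (U_base n + l) = int (U k u l)"
  proof (cases "l = len")
    case True then show ?thesis using assms(2) by simp
  next
    case False
    have "16 < U_base n + l" using n_ge_1 unfolding U_base_def by linarith
    then have "m' (U_base n + l) = m (U_base n + l)" using assms(3) False by simp
    then show ?thesis using assms(1) l False unfolding U_table_def by simp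
  qed
qed

lemma store_U:
  assumes Q: "sum_done len (102, m)"
  shows "prog_reaches (102, m) (main_inv len) 8"
proof -
  have lay: "layout m" and st: "powers_table m" "lcp_full m" "U_table len m" "m 12 = int len" "m 14 = int (min (length u) len)"
    "m 15 = int (B k (take len u) len)" "1 \<le> len" "len \<le> n"
    using Q unfolding sum_done_def by auto
  define q where "q = min (length u) len"
  have f5: "m 14 = int q" using st(5) q_def by simp
  have q': "q \<le> len" unfolding q_def by simp
  have eqA: "pow_base n + len - q = pow_base n + (len - q)" using q' by simp
  have nn: "nat (int len - int q) = len - q" by simp
  have pw: "m (pow_base n + len - q) = int k ^ (len - q)" "m (pow_base n + nat (int len - int q)) = int k ^ (len - q)"
    unfolding eqA nn using powers_tableD[OF st(1), of "len - q"] st(8) by simp_all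
  have ne: "pow_base n + len - q \<noteq> 0" "pow_base n + len - q \<noteq> Suc 0" "\<not> pow_base n + len \<le> q"
    unfolding eqA using n_ge_1 q' by (auto simp: pow_base_def)
  have b1: "U_base n + len < 80 * n" using st(8) n_ge_1 unfolding U_base_def by linarith
  have b: "U_base n + len < 80 * n" "pow_base n \<le> U_base n + len" "U_base n \<le> U_base n + len" using b1 unfolding U_base_def pow_base_def by auto
  have Wv: "int k ^ (len - q) - int (B k (take len u) len) = int (U k u len)"
    using U_add_B_take[OF u_letters, of len] unfolding q_def[symmetric]
    by (metis add_diff_cancel_right' of_nat_add of_nat_power)
  show ?thesis
    using layout_regs[OF lay] st(4,6) f5 pw ne b q'
    apply -
    apply (rule reaches_step, simp, simp, simp)+
    apply (rule reaches_now)
     apply simp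
    using lay st b Wv by (auto simp: main_inv_def intro!: U_table_extend[OF st(3)])
qed

lemma main_iter:
  assumes j: "j < n" and I: "main_inv j c"
  shows "prog_reaches c (main_inv (Suc j)) (20 * n + 40)"
proof -
  obtain m where c: "c = (67, m)" using I unfolding main_inv_def by (cases c) auto
  have "prog_reaches (67, m) (main_inv (Suc j)) (9 + Suc (Suc j div 2) * 20 + 8)"
  proof (rule reaches_seq)
    show "prog_reaches (67, m) (sum_done (Suc j)) (9 + Suc (Suc j div 2) * 20)"
    proof (rule reaches_seq[OF main_enter_sum[OF I[unfolded c] j]])
      fix c' :: config assume "sum_inv (Suc j) 1 c'"
      then show "prog_reaches c' (sum_done (Suc j)) (Suc (Suc j div 2) * 20)"
        using sum_loop[of "Suc j" "snd c'"] unfolding sum_inv_def by (cases c') auto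
    qed
  next
    fix c' :: config assume "sum_done (Suc j) c'"
    then show "prog_reaches c' (main_inv (Suc j)) 8"
      using store_U[of "Suc j" "snd c'"] unfolding sum_done_def by (cases c') auto
  qed
  moreover have "9 + Suc (Suc j div 2) * 20 + 8 \<le> 20 * n + 40" using j by simp
  ultimately show ?thesis unfolding c by (rule reaches_mono) auto
qed

lemma main_block:
  assumes lay: "layout m" and st: "powers_table m" "lcp_full m"
  shows "prog_reaches (66, m) (\<lambda>c. fst c = 111 \<and> snd c 0 = int (B k (take n u) n)) (1 + Suc n * (20 * n + 40))"
proof (rule reaches_seq)
  show "prog_reaches (66, m) (main_inv 0) 1"
    using layout_regs[OF lay] st
    apply -
    apply (rule reaches_step, simp, simp, simp)+
    apply (rule reaches_now)
     apply simp
    using lay st by (simp add: main_inv_def U_table_def)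
next
  fix c :: config assume "main_inv 0 c"
  then show "prog_reaches c (\<lambda>c. fst c = 111 \<and> snd c 0 = int (B k (take n u) n)) (Suc n * (20 * n + 40))"
  proof (rule reaches_loop[where I=main_inv, rotated 2])
    fix j and c :: config assume a: "j < n" "main_inv j c"
    show "prog_reaches c (\<lambda>c'. (fst c' = 111 \<and> snd c' 0 = int (B k (take n u) n)) \<or> main_inv (Suc j) c') (20 * n + 40)"
      using main_iter[OF a] by (rule reaches_mono) auto
  next
    fix c :: config assume I: "main_inv n c"
    obtain m where c: "c = (67, m)" using I unfolding main_inv_def by (cases c) auto
    have "prog_reaches c (\<lambda>c. fst c = 111 \<and> snd c 0 = int (B k (take n u) n)) 3"
      using main_exit[of m] I c by simp
    then show "prog_reaches c (\<lambda>c. fst c = 111 \<and> snd c 0 = int (B k (take n u) n)) (20 * n + 40)"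
      by (rule reaches_mono) auto
  qed
qed

lemma time_bound:
  "(10 + Suc (length u) * 9 + 15) + (2 + Suc n * 7) + (1 + Suc (length u - 1) * (12 * n + 21))
     + (1 + Suc n * (20 * n + 40)) \<le> 400 * n\<^sup>2"
proof -
  have "Suc (length u) * 9 \<le> Suc n * 9" "Suc (length u - 1) * (12 * n + 21) \<le> Suc n * (12 * n + 21)"
    using u_short by simp_all
  then have "(10 + Suc (length u) * 9 + 15) + (2 + Suc n * 7) + (1 + Suc (length u - 1) * (12 * n + 21))
      + (1 + Suc n * (20 * n + 40)) \<le> 32 * (n * n) + 109 * n + 106"
    by (simp add: algebra_simps)
  moreover have "n \<le> n * n" "1 \<le> n * n"
    using n_ge_1 by (simp_all add: mult_le_mono)
  ultimately show ?thesis
    unfolding power2_eq_square by linarith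
qed

theorem prog_computes_B:
  "prog_reaches (init k n u) (\<lambda>c. fst c = 111 \<and> snd c 0 = int (B k u n)) (400 * n\<^sup>2)"
proof -
  have "prog_reaches (init k n u) (\<lambda>c. fst c = 66 \<and> layout (snd c) \<and> powers_table (snd c) \<and> lcp_full (snd c))
      ((10 + Suc (length u) * 9 + 15) + (2 + Suc n * 7) + (1 + Suc (length u - 1) * (12 * n + 21)))"
  proof (rule reaches_seq[OF reaches_seq[OF setup_phase]])
    fix c :: config assume "fst c = 34 \<and> layout (snd c)"
    then show "prog_reaches c (\<lambda>c. fst c = 43 \<and> layout (snd c) \<and> powers_table (snd c)) (2 + Suc n * 7)"
      using powers_block[of "snd c"] by (cases c) auto
  next
    fix c :: config assume "fst c = 43 \<and> layout (snd c) \<and> powers_table (snd c)"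
    then show "prog_reaches c (\<lambda>c. fst c = 66 \<and> layout (snd c) \<and> powers_table (snd c) \<and> lcp_full (snd c))
        (1 + Suc (length u - 1) * (12 * n + 21))"
      using lcp_block[of "snd c"] unfolding lcp_full_def by (cases c) auto
  qed
  then have "prog_reaches (init k n u) (\<lambda>c. fst c = 111 \<and> snd c 0 = int (B k (take n u) n))
      ((10 + Suc (length u) * 9 + 15) + (2 + Suc n * 7) + (1 + Suc (length u - 1) * (12 * n + 21))
        + (1 + Suc n * (20 * n + 40)))"
    by (rule reaches_seq) (use main_block in \<open>cases rule: prod.exhaust, auto\<close>)
  then show ?thesis
    by (rule reaches_mono[OF _ time_bound]) (simp add: u_short)
qed

end

theorem theorem6:
  shows "\<exists>(P :: instr list) (c :: nat). \<forall>k n u.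
           n \<ge> 1 \<longrightarrow> k \<ge> 2 \<longrightarrow> length u \<le> n \<longrightarrow> set u \<subseteq> {1..k} \<longrightarrow>
           (\<exists>t \<le> c * n^2.
              halted P (run P t (init k n u)) \<and>
              snd (run P t (init k n u)) 0 = int (B k u n) \<and>
              (\<forall>s \<le> t. \<forall>a \<ge> c * n. snd (run P s (init k n u)) a = 0))"
proof (rule exI[of _ prog], rule exI[of _ 400], intro allI impI)
  fix k n :: nat and u :: "nat list"
  assume "n \<ge> 1" and "k \<ge> 2" and "length u \<le> n" and "set u \<subseteq> {1..k}"
  then interpret count_input k n u
    by unfold_locales
  obtain t where "t \<le> 400 * n\<^sup>2" "fst (run prog t (init k n u)) = 111"
      "snd (run prog t (init k n u)) 0 = int (B k u n)"
      "\<forall>s \<le> t. mem_bounded (80 * n) (snd (run prog s (init k n u)))"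
    using prog_computes_B unfolding reaches_def by blast
  then show "\<exists>t \<le> 400 * n^2. halted prog (run prog t (init k n u)) \<and>
      snd (run prog t (init k n u)) 0 = int (B k u n) \<and>
      (\<forall>s \<le> t. \<forall>a \<ge> 400 * n. snd (run prog s (init k n u)) a = 0)"
    unfolding halted_def mem_bounded_def by (intro exI[of _ t]) auto
qed

end
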